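(* For DPP-TS-alt, for every round $t$ and every $b\in[3,B]$, $$\mathbb{E}\big[\sigma_{t,b}(x_{t,b})\big]\le \mathbb{E}\big[\sigma_{t,b-1}(x_{t,b-1})\big].$$
   Context: Setting: $f\sim GP(0,k)$ on a domain $\mathcal{X}$. Fix batch size $B\ge 3$ and horizon $T$. In each round $t$ an algorithm selects $x_{t,1},\dots,x_{t,B}\in\mathcal{X}$ before receiving feedback from round $t$, then observes $y_{t,b}=f(x_{t,b})+\epsilon_{t,b}$, $\epsilon_{t,b}$ i.i.d. $\mathcal N(0,\sigma^2)$ independent of $f$. Index pairs $(t,b)$ are ordered lexicographically; $D_{t,b}$ is the set of pairs $(x_{t',b'},y_{t',b'})$ with $(t',b')\le (t,b)$; $D_{t,0}:=D_{t-1,B}$, $D_{0,B}:=\emptyset$. $\sigma^2_{t,b}(x)$ is the GP posterior variance of $f(x)$ given $D_{t,b-1}$ (depending only on observed locations). $p_{\max,t}$ is the law of $\arg\max_x\tilde f(x)$ with $\tilde f$ drawn from the posterior of $f$ given $D_{t-1,B}$. DPP-TS-alt: in round $t$, $x_{t,1}\sim p_{\max,t}$; then $(x_{t,2},\dots,x_{t,B})$ are drawn jointly from the distribution on $\mathcal{X}^{B-1}$ with density, with respect to $p_{\max,t}^{\otimes(B-1)}$, proportional to $\det(I+\sigma^{-2}K^{(t)}_X)$, where $X=(x_{t,2},\dots,x_{t,B})$ and $K^{(t)}_X$ is the matrix of the GP posterior covariance of $f$ given $D_{t-1,B}$ together with an observation at $x_{t,1}$, evaluated at the points of $X$. *)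

theory Defs
  imports "HOL-Probability.Probability" "Jordan_Normal_Form.Gauss_Jordan_Elimination" "Jordan_Normal_Form.Determinant"
begin

definition psd_kernel :: "('a \<Rightarrow> 'a \<Rightarrow> real) \<Rightarrow> bool" where
  "psd_kernel k \<longleftrightarrow> (\<forall>x y. k x y = k y x) \<and>
     (\<forall>(xs::'a list) (c::nat \<Rightarrow> real).
        0 \<le> (\<Sum>i<length xs. \<Sum>j<length xs. c i * c j * k (xs ! i) (xs ! j)))"

definition gram :: "('a \<Rightarrow> 'a \<Rightarrow> real) \<Rightarrow> 'a list \<Rightarrow> real mat" where
  "gram k xs = mat (length xs) (length xs) (\<lambda>(i, j). k (xs ! i) (xs ! j))"

definition kvec :: "('a \<Rightarrow> 'a \<Rightarrow> real) \<Rightarrow> 'a list \<Rightarrow> 'a \<Rightarrow> real vec" where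
  "kvec k xs x = vec (length xs) (\<lambda>i. k (xs ! i) x)"

text \<open>GP posterior covariance of f(x), f(y) given noisy observations (noise variance
  noise) at the locations xs: k(x,y) - k_xs(x)^T (K_xs + noise I)^{-1} k_xs(y).\<close>
definition post_cov :: "('a \<Rightarrow> 'a \<Rightarrow> real) \<Rightarrow> real \<Rightarrow> 'a list \<Rightarrow> 'a \<Rightarrow> 'a \<Rightarrow> real" where
  "post_cov k noise xs x y =
     (case mat_inverse (gram k xs + noise \<cdot>\<^sub>m 1\<^sub>m (length xs)) of
        Some Ai \<Rightarrow> k x y - scalar_prod (kvec k xs x) (Ai *\<^sub>v kvec k xs y)
      | None \<Rightarrow> 0)"

definition post_sd :: "('a \<Rightarrow> 'a \<Rightarrow> real) \<Rightarrow> real \<Rightarrow> 'a list \<Rightarrow> 'a \<Rightarrow> real" where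
  "post_sd k noise xs x = sqrt (post_cov k noise xs x x)"

text \<open>The batch (x_{t,1}, ..., x_{t,B}) with x_{t,1} = x1 and x_{t,i+2} = X i, i < m = B-1.\<close>
definition batch :: "'a \<Rightarrow> nat \<Rightarrow> (nat \<Rightarrow> 'a) \<Rightarrow> 'a list" where
  "batch x1 m X = x1 # map X [0..<m]"

text \<open>DPP weight det(I + noise^{-1} K^{(t)}_X), where K^{(t)} is the posterior covariance given
  the previous locations D (those of D_{t-1,B}) together with x1.\<close>
definition dpp_weight :: "('a \<Rightarrow> 'a \<Rightarrow> real) \<Rightarrow> real \<Rightarrow> 'a list \<Rightarrow> 'a \<Rightarrow> nat \<Rightarrow> (nat \<Rightarrow> 'a) \<Rightarrow> real" where
  "dpp_weight k noise D x1 m X =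
     det (1\<^sub>m m + (1 / noise) \<cdot>\<^sub>m mat m m (\<lambda>(i, j). post_cov k noise (D @ [x1]) (X i) (X j)))"

definition dpp_norm :: "('a \<Rightarrow> 'a \<Rightarrow> real) \<Rightarrow> real \<Rightarrow> 'a list \<Rightarrow> 'a measure \<Rightarrow> nat \<Rightarrow> 'a \<Rightarrow> ennreal" where
  "dpp_norm k noise D p B x1 =
     (\<integral>\<^sup>+ X. ennreal (dpp_weight k noise D x1 (B - 1) X) \<partial>(PiM {..<B - 1} (\<lambda>_. p)))"

text \<open>Expectation of a nonnegative function g of the round-t batch under DPP-TS-alt,
  given previous locations D and p = p_max,t: x_{t,1} ~ p, then (x_{t,2},...,x_{t,B}) has
  density proportional to the DPP weight w.r.t. p^{B-1}.\<close>
definition round_expect :: "('a \<Rightarrow> 'a \<Rightarrow> real) \<Rightarrow> real \<Rightarrow> 'a list \<Rightarrow> 'a measure \<Rightarrow> nat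
     \<Rightarrow> ('a list \<Rightarrow> ennreal) \<Rightarrow> ennreal" where
  "round_expect k noise D p B g =
     (\<integral>\<^sup>+ x1. (\<integral>\<^sup>+ X. ennreal (dpp_weight k noise D x1 (B - 1) X) * g (batch x1 (B - 1) X)
                   \<partial>(PiM {..<B - 1} (\<lambda>_. p))) / dpp_norm k noise D p B x1 \<partial>p)"

text \<open>sigma_{t,b}(x_{t,b}): posterior sd at the b-th batch point given D_{t,b-1}, i.e. the
  previous locations D together with x_{t,1},...,x_{t,b-1}.\<close>
definition sigma_sel :: "('a \<Rightarrow> 'a \<Rightarrow> real) \<Rightarrow> real \<Rightarrow> 'a list \<Rightarrow> nat \<Rightarrow> 'a list \<Rightarrow> real" where
  "sigma_sel k noise D b pts = post_sd k noise (D @ take (b - 1) pts) (pts ! (b - 1))"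

end

theory Submission
  imports Defs
begin

text \<open>Given locations xs, the posterior variance at x is the minimum over a of
  k(x,x) - 2 a^T k_xs(x) + a^T (K_xs + noise I) a; padding the minimiser for xs with a zero
  shows that one more observation never increases it. Hence sigma_{t,b}(x_{t,b}) is at most the
  posterior standard deviation at x_{t,b} given D_{t,b-2}. Under DPP-TS-alt the points
  x_{t,2}, ..., x_{t,B} are exchangeable: the base measure p_{max,t}^{B-1} is invariant under
  permuting coordinates, and so is the DPP weight, a determinant whose rows and columns are then
  permuted simultaneously. Swapping x_{t,b-1} and x_{t,b} turns the bound into
  sigma_{t,b-1}(x_{t,b-1}).\<close>

lemma quadratic_form_bounded_by_solution:
  fixes A :: "nat \<Rightarrow> nat \<Rightarrow> real" and u v a :: "nat \<Rightarrow> real"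
  assumes sym: "\<And>i j. i < n \<Longrightarrow> j < n \<Longrightarrow> A i j = A j i"
    and sol: "\<And>i. i < n \<Longrightarrow> (\<Sum>j<n. A i j * u j) = v i"
    and psd: "\<And>d. 0 \<le> (\<Sum>i<n. \<Sum>j<n. d i * d j * A i j)"
  shows "2 * (\<Sum>i<n. a i * v i) - (\<Sum>i<n. \<Sum>j<n. a i * a j * A i j) \<le> (\<Sum>i<n. u i * v i)"
proof -
  define d where "d i = a i - u i" for i
  have a: "a i = u i + d i" for i by (simp add: d_def)
  have expand: "(\<Sum>i<n. \<Sum>j<n. a i * a j * A i j) =
      (\<Sum>i<n. \<Sum>j<n. u i * u j * A i j) + (\<Sum>i<n. \<Sum>j<n. d i * u j * A i j)
      + (\<Sum>i<n. \<Sum>j<n. u i * d j * A i j) + (\<Sum>i<n. \<Sum>j<n. d i * d j * A i j)"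
    by (simp add: a algebra_simps sum.distrib)
  have cross: "(\<Sum>i<n. \<Sum>j<n. u i * d j * A i j) = (\<Sum>i<n. \<Sum>j<n. d i * u j * A i j)"
    by (subst sum.swap) (auto intro!: sum.cong simp: sym)
  have solve: "(\<Sum>i<n. \<Sum>j<n. w i * u j * A i j) = (\<Sum>i<n. w i * v i)" for w
  proof -
    have "(\<Sum>i<n. \<Sum>j<n. w i * u j * A i j) = (\<Sum>i<n. w i * (\<Sum>j<n. A i j * u j))"
      by (simp add: sum_distrib_left algebra_simps)
    also have "\<dots> = (\<Sum>i<n. w i * v i)" by (simp add: sol)
    finally show ?thesis .
  qed
  have linear: "(\<Sum>i<n. a i * v i) = (\<Sum>i<n. u i * v i) + (\<Sum>i<n. d i * v i)"
    by (simp add: a algebra_simps sum.distrib)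
  show ?thesis using psd[of d] unfolding expand cross linear solve[of u] solve[of d] by simp
qed

definition noisy_gram :: "('a \<Rightarrow> 'a \<Rightarrow> real) \<Rightarrow> real \<Rightarrow> 'a list \<Rightarrow> real mat" where
  "noisy_gram k noise xs = gram k xs + noise \<cdot>\<^sub>m 1\<^sub>m (length xs)"

lemma noisy_gram_carrier: "noisy_gram k noise xs \<in> carrier_mat (length xs) (length xs)"
  by (simp add: noisy_gram_def gram_def)

lemma noisy_gram_index:
  "i < length xs \<Longrightarrow> j < length xs \<Longrightarrow>
   noisy_gram k noise xs $$ (i, j) = k (xs ! i) (xs ! j) + (if i = j then noise else 0)"
  by (simp add: noisy_gram_def gram_def)

lemma noisy_gram_symmetric:
  assumes "psd_kernel k" "i < length xs" "j < length xs"
  shows "noisy_gram k noise xs $$ (i, j) = noisy_gram k noise xs $$ (j, i)"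
  using assms by (simp add: noisy_gram_index psd_kernel_def)

lemma noisy_gram_quadratic_ge:
  assumes "psd_kernel k"
  shows "noise * (\<Sum>i<length xs. d i ^ 2) \<le>
    (\<Sum>i<length xs. \<Sum>j<length xs. d i * d j * noisy_gram k noise xs $$ (i, j))"
proof -
  let ?n = "length xs"
  have "(\<Sum>i<?n. \<Sum>j<?n. d i * d j * noisy_gram k noise xs $$ (i, j))
     = (\<Sum>i<?n. \<Sum>j<?n. d i * d j * k (xs ! i) (xs ! j))
       + (\<Sum>i<?n. \<Sum>j<?n. d i * d j * (if i = j then noise else 0))"
    by (simp add: noisy_gram_index algebra_simps sum.distrib)
  also have "(\<Sum>i<?n. \<Sum>j<?n. d i * d j * (if i = j then noise else 0)) = noise * (\<Sum>i<?n. d i ^ 2)"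
    by (simp add: sum_distrib_left power2_eq_square algebra_simps if_distrib sum.If_cases
        cong: if_cong)
  finally show ?thesis using assms unfolding psd_kernel_def by auto
qed

lemma noisy_gram_psd:
  assumes "psd_kernel k" "noise > 0"
  shows "0 \<le> (\<Sum>i<length xs. \<Sum>j<length xs. d i * d j * noisy_gram k noise xs $$ (i, j))"
  using noisy_gram_quadratic_ge[OF assms(1), where noise=noise and xs=xs and d=d] assms(2)
  by (smt (verit) sum_nonneg zero_le_power2 mult_nonneg_nonneg)

lemma det_noisy_gram_nonzero:
  assumes "psd_kernel k" "noise > 0"
  shows "det (noisy_gram k noise xs) \<noteq> 0"
proof
  let ?n = "length xs" and ?A = "noisy_gram k noise xs"
  assume "det ?A = 0"
  then obtain v where v: "v \<in> carrier_vec ?n" "v \<noteq> 0\<^sub>v ?n" "?A *\<^sub>v v = 0\<^sub>v ?n"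
    using det_0_iff_vec_prod_zero[OF noisy_gram_carrier] by blast
  then obtain i0 where i0: "i0 < ?n" "v $ i0 \<noteq> 0" by (auto simp: vec_eq_iff)
  have "0 < (v $ i0) ^ 2" using i0 by simp
  also have "\<dots> \<le> (\<Sum>i<?n. (v $ i) ^ 2)" using i0 by (intro member_le_sum) auto
  finally have pos: "0 < noise * (\<Sum>i<?n. (v $ i) ^ 2)" using assms(2) by simp
  have row_zero: "(\<Sum>j<?n. ?A $$ (i, j) * v $ j) = 0" if "i < ?n" for i
  proof -
    have "(?A *\<^sub>v v) $ i = 0" using v(3) that by simp
    thus ?thesis using that noisy_gram_carrier[of k noise xs] v(1)
      by (simp add: scalar_prod_def row_def atLeast0LessThan)
  qed
  have "(\<Sum>i<?n. \<Sum>j<?n. v $ i * v $ j * ?A $$ (i, j)) = (\<Sum>i<?n. v $ i * (\<Sum>j<?n. ?A $$ (i, j) * v $ j))"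
    by (simp add: sum_distrib_left algebra_simps)
  also have "\<dots> = 0" by (simp add: row_zero)
  finally show False using noisy_gram_quadratic_ge[OF assms(1), where noise=noise and xs=xs and d="\<lambda>i. v $ i"] pos by simp
qed

lemma noisy_gram_inverse:
  assumes "psd_kernel k" "noise > 0"
  obtains Ai where "mat_inverse (noisy_gram k noise xs) = Some Ai"
    and "noisy_gram k noise xs * Ai = 1\<^sub>m (length xs)" and "Ai \<in> carrier_mat (length xs) (length xs)"
proof -
  let ?n = "length xs" and ?A = "noisy_gram k noise xs"
  have "?A \<in> Units (ring_mat TYPE(real) ?n ())"
    by (intro det_non_zero_imp_unit noisy_gram_carrier det_noisy_gram_nonzero assms)
  then obtain Ai where "mat_inverse ?A = Some Ai"
    using mat_inverse(1)[OF noisy_gram_carrier[of k noise xs], where b="()"] by fastforce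
  with mat_inverse(2)[OF noisy_gram_carrier] that show thesis by blast
qed

lemma post_cov_diag_solution:
  assumes "psd_kernel k" "noise > 0"
  obtains u where "\<And>i. i < length xs \<Longrightarrow>
      (\<Sum>j<length xs. noisy_gram k noise xs $$ (i, j) * u j) = k (xs ! i) x"
    and "post_cov k noise xs x x = k x x - (\<Sum>i<length xs. u i * k (xs ! i) x)"
proof -
  let ?n = "length xs" and ?A = "noisy_gram k noise xs" and ?w = "kvec k xs x"
  obtain Ai where Ai: "mat_inverse ?A = Some Ai" "?A * Ai = 1\<^sub>m ?n" "Ai \<in> carrier_mat ?n ?n"
    using noisy_gram_inverse[OF assms] by blast
  have w: "?w \<in> carrier_vec ?n" by (simp add: kvec_def)
  define uv where "uv = Ai *\<^sub>v ?w"
  have uv: "uv \<in> carrier_vec ?n" unfolding uv_def using Ai(3) w by (rule mult_mat_vec_carrier)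
  have "?A *\<^sub>v uv = (?A * Ai) *\<^sub>v ?w"
    unfolding uv_def using Ai(3) w noisy_gram_carrier[of k noise xs] by (simp add: assoc_mult_mat_vec)
  with Ai(2) w have A_uv: "?A *\<^sub>v uv = ?w" by simp
  show thesis
  proof (rule that[of "\<lambda>i. uv $ i"])
    fix i assume i: "i < ?n"
    have "(?A *\<^sub>v uv) $ i = ?w $ i" using A_uv by simp
    thus "(\<Sum>j<?n. ?A $$ (i, j) * uv $ j) = k (xs ! i) x"
      using i uv noisy_gram_carrier[of k noise xs]
      by (simp add: scalar_prod_def row_def atLeast0LessThan kvec_def)
  next
    have "post_cov k noise xs x x = k x x - scalar_prod ?w uv"
      unfolding post_cov_def noisy_gram_def[symmetric] Ai(1) uv_def by simp
    also have "scalar_prod ?w uv = (\<Sum>i<?n. uv $ i * k (xs ! i) x)"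
      using uv by (simp add: scalar_prod_def kvec_def atLeast0LessThan mult.commute)
    finally show "post_cov k noise xs x x = k x x - (\<Sum>i<?n. uv $ i * k (xs ! i) x)" .
  qed
qed

lemma post_cov_snoc_le:
  assumes "psd_kernel k" "noise > 0"
  shows "post_cov k noise (xs @ [y]) x x \<le> post_cov k noise xs x x"
proof -
  let ?n = "length xs" and ?ys = "xs @ [y]"
  obtain u where u: "\<And>i. i < ?n \<Longrightarrow> (\<Sum>j<?n. noisy_gram k noise xs $$ (i, j) * u j) = k (xs ! i) x"
      and post: "post_cov k noise xs x x = k x x - (\<Sum>i<?n. u i * k (xs ! i) x)"
    using post_cov_diag_solution[OF assms] by blast
  obtain u' where u': "\<And>i. i < length ?ys \<Longrightarrow>
        (\<Sum>j<length ?ys. noisy_gram k noise ?ys $$ (i, j) * u' j) = k (?ys ! i) x"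
      and post': "post_cov k noise ?ys x x = k x x - (\<Sum>i<length ?ys. u' i * k (?ys ! i) x)"
    using post_cov_diag_solution[OF assms] by blast
  define a where "a i = (if i < ?n then u i else 0)" for i
  have "2 * (\<Sum>i<length ?ys. a i * k (?ys ! i) x)
      - (\<Sum>i<length ?ys. \<Sum>j<length ?ys. a i * a j * noisy_gram k noise ?ys $$ (i, j))
      \<le> (\<Sum>i<length ?ys. u' i * k (?ys ! i) x)"
    by (rule quadratic_form_bounded_by_solution)
      (use u' noisy_gram_symmetric[OF assms(1)] noisy_gram_psd[OF assms, where xs="?ys"] in auto)
  moreover have "(\<Sum>i<length ?ys. a i * k (?ys ! i) x) = (\<Sum>i<?n. u i * k (xs ! i) x)"
    by (simp add: a_def nth_append)
  moreover have "(\<Sum>i<length ?ys. \<Sum>j<length ?ys. a i * a j * noisy_gram k noise ?ys $$ (i, j))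
      = (\<Sum>i<?n. u i * (\<Sum>j<?n. noisy_gram k noise xs $$ (i, j) * u j))"
    by (simp add: a_def noisy_gram_index nth_append sum_distrib_left algebra_simps)
  ultimately show ?thesis unfolding post post' by (simp add: u)
qed

lemma post_sd_snoc_le:
  assumes "psd_kernel k" "noise > 0"
  shows "post_sd k noise (xs @ [y]) x \<le> post_sd k noise xs x"
  unfolding post_sd_def using post_cov_snoc_le[OF assms] by simp

lemma det_mat_transpose_indices:
  fixes F :: "nat \<Rightarrow> nat \<Rightarrow> 'b :: comm_ring_1"
  assumes "a < m" "c < m" "a \<noteq> c"
  shows "det (mat m m (\<lambda>(i, j). F (Transposition.transpose a c i) (Transposition.transpose a c j)))
       = det (mat m m (\<lambda>(i, j). F i j))"
proof -
  let ?M = "mat m m (\<lambda>(i, j). F i j)"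
  have "mat m m (\<lambda>(i, j). F (Transposition.transpose a c i) (Transposition.transpose a c j))
      = swaprows a c (swapcols a c ?M)"
    using assms by (intro eq_matI) (auto simp: Transposition.transpose_def)
  thus ?thesis using assms by (simp add: det_swaprows det_swapcols)
qed

lemma dpp_weight_cong:
  "(\<And>i. i < m \<Longrightarrow> X i = Y i) \<Longrightarrow> dpp_weight k noise D x1 m X = dpp_weight k noise D x1 m Y"
  unfolding dpp_weight_def by (intro arg_cong[where f = det] arg_cong2[where f = "(+)"] refl
      arg_cong[where f = "\<lambda>A. (1 / noise) \<cdot>\<^sub>m A"] eq_matI) auto

lemma dpp_weight_transpose:
  assumes "a < m" "c < m" "a \<noteq> c"
  shows "dpp_weight k noise D x1 m (X \<circ> Transposition.transpose a c) = dpp_weight k noise D x1 m X"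
proof -
  define F where "F i j = (if i = j then 1 else 0) + (1 / noise) * post_cov k noise (D @ [x1]) (X i) (X j)"
    for i j
  have entries: "dpp_weight k noise D x1 m Y
      = det (mat m m (\<lambda>(i, j). (if i = j then 1 else 0) + (1 / noise) * post_cov k noise (D @ [x1]) (Y i) (Y j)))"
    for Y unfolding dpp_weight_def by (intro arg_cong[where f = det] eq_matI) auto
  have "dpp_weight k noise D x1 m (X \<circ> Transposition.transpose a c)
      = det (mat m m (\<lambda>(i, j). F (Transposition.transpose a c i) (Transposition.transpose a c j)))"
    unfolding entries F_def
    by (simp only: comp_def inj_eq[OF inj_transpose])
  also have "\<dots> = det (mat m m (\<lambda>(i, j). F i j))"
    by (rule det_mat_transpose_indices[OF assms])
  also have "\<dots> = dpp_weight k noise D x1 m X"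
    unfolding entries F_def ..
  finally show ?thesis .
qed

text \<open>The integrand need not be measurable, so this is argued on the simple functions below it.\<close>
lemma nn_integral_involution_le:
  fixes g :: "'a \<Rightarrow> ennreal"
  assumes T: "T \<in> measurable M M" and inv: "\<And>x. x \<in> space M \<Longrightarrow> T (T x) = x"
    and pres: "distr M M T = M"
  shows "(\<integral>\<^sup>+ x. g (T x) \<partial>M) \<le> (\<integral>\<^sup>+ x. g x \<partial>M)"
  unfolding nn_integral_def[of M "\<lambda>x. g (T x)"]
proof (rule SUP_least)
  fix u assume "u \<in> {u. simple_function M u \<and> u \<le> (\<lambda>x. g (T x))}"
  hence su: "simple_function M u" and ule: "\<And>x. u x \<le> g (T x)" by (auto simp: le_fun_def)
  define v where "v x = (if x \<in> space M then u (T x) else 0)" for x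
  have vle: "v x \<le> g x" for x using ule[of "T x"] inv[of x] by (auto simp: v_def)
  have "integral\<^sup>S M u = integral\<^sup>N (distr M M T) u"
    by (simp add: pres nn_integral_eq_simple_integral[OF su])
  also have "\<dots> = (\<integral>\<^sup>+ x. v x \<partial>M)"
    by (subst nn_integral_distr[OF T]) (auto simp: pres borel_measurable_simple_function[OF su]
        v_def intro!: nn_integral_cong)
  also have "\<dots> \<le> (\<integral>\<^sup>+ x. g x \<partial>M)" by (rule nn_integral_mono) (simp add: vle)
  finally show "integral\<^sup>S M u \<le> (\<integral>\<^sup>+ x. g x \<partial>M)" .
qed

lemma nn_integral_PiM_transpose_le:
  fixes g :: "(nat \<Rightarrow> 'a) \<Rightarrow> ennreal"
  assumes p: "prob_space p" and "a \<in> I" "c \<in> I"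
  shows "(\<integral>\<^sup>+ X. g (\<lambda>n\<in>I. X (Transposition.transpose a c n)) \<partial>PiM I (\<lambda>_. p))
       \<le> (\<integral>\<^sup>+ X. g X \<partial>PiM I (\<lambda>_. p))"
proof (rule nn_integral_involution_le)
  let ?f = "Transposition.transpose a c"
  have f_I: "?f n \<in> I \<longleftrightarrow> n \<in> I" for n
    using assms(2,3) by (auto simp: Transposition.transpose_def)
  show "(\<lambda>X. \<lambda>n\<in>I. X (?f n)) \<in> measurable (PiM I (\<lambda>_. p)) (PiM I (\<lambda>_. p))"
    by (rule measurable_restrict) (use f_I in auto)
  show "(\<lambda>n\<in>I. (\<lambda>n\<in>I. X (?f n)) (?f n)) = X" if "X \<in> space (PiM I (\<lambda>_. p))" for X
    using that f_I by (auto simp: space_PiM PiE_def extensional_def)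
  have "inj_on ?f I" "?f \<in> I \<rightarrow> I" using f_I by auto
  then show "distr (PiM I (\<lambda>_. p)) (PiM I (\<lambda>_. p)) (\<lambda>X. \<lambda>n\<in>I. X (?f n)) = PiM I (\<lambda>_. p)"
    using distr_PiM_reindex[of I "\<lambda>_. p" ?f I] p by auto
qed

lemma sigma_sel_le_snoc_dropped:
  assumes "psd_kernel k" "noise > 0" "3 \<le> b" "b \<le> length pts"
  shows "sigma_sel k noise D b pts \<le> post_sd k noise (D @ take (b - 2) pts) (pts ! (b - 1))"
proof -
  have "take (b - 1) pts = take (b - 2) pts @ [pts ! (b - 2)]"
    using assms(3,4) take_Suc_conv_app_nth[of "b - 2" pts] by (simp add: Suc_diff_Suc numeral_2_eq_2)
  thus ?thesis
    unfolding sigma_sel_def using post_sd_snoc_le[OF assms(1,2), of "D @ take (b - 2) pts"] by simp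
qed

text \<open>Transposing coordinates \<open>b - 3\<close> and \<open>b - 2\<close> of \<open>X\<close> exchanges the batch points
  \<open>b - 1\<close> and \<open>b\<close>, since the batch is \<open>x1\<close> followed by \<open>X 0, X 1, \<dots>\<close>.\<close>
lemma sigma_sel_batch_le_transposed:
  assumes "psd_kernel k" "noise > 0" "3 \<le> b" "b \<le> Suc m"
  shows "sigma_sel k noise D b (batch x1 m X)
       \<le> sigma_sel k noise D (b - 1) (batch x1 m (X \<circ> Transposition.transpose (b - 3) (b - 2)))"
proof -
  obtain c where b: "b = c + 3" using assms(3) by (metis add.commute le_iff_add)
  let ?f = "Transposition.transpose c (Suc c)"
  have "take (Suc c) (batch x1 m (X \<circ> ?f)) = take (Suc c) (batch x1 m X)"
    using assms(4) by (simp add: b batch_def take_map Transposition.transpose_def)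
  moreover have "batch x1 m (X \<circ> ?f) ! Suc c = batch x1 m X ! Suc (Suc c)"
    using assms(4) by (simp add: b batch_def)
  ultimately have "sigma_sel k noise D (b - 1) (batch x1 m (X \<circ> ?f))
      = post_sd k noise (D @ take (b - 2) (batch x1 m X)) (batch x1 m X ! (b - 1))"
    by (simp add: sigma_sel_def b numeral_3_eq_3)
  moreover have "length (batch x1 m X) = Suc m" by (simp add: batch_def)
  ultimately show ?thesis
    using sigma_sel_le_snoc_dropped[OF assms(1-3)] assms(4) by (simp add: b numeral_3_eq_3)
qed

lemma dpp_integral_sigma_sel_mono:
  assumes "psd_kernel k" "noise > 0" "3 \<le> b" "b \<le> B" and p: "prob_space p"
  shows "(\<integral>\<^sup>+ X. ennreal (dpp_weight k noise D x1 (B - 1) X)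
              * ennreal (sigma_sel k noise D b (batch x1 (B - 1) X)) \<partial>PiM {..<B - 1} (\<lambda>_. p))
       \<le> (\<integral>\<^sup>+ X. ennreal (dpp_weight k noise D x1 (B - 1) X)
              * ennreal (sigma_sel k noise D (b - 1) (batch x1 (B - 1) X)) \<partial>PiM {..<B - 1} (\<lambda>_. p))"
proof -
  define m where "m = B - 1"
  define f where "f = Transposition.transpose (b - 3) (b - 2)"
  define G where "G X = ennreal (dpp_weight k noise D x1 m X)
      * ennreal (sigma_sel k noise D (b - 1) (batch x1 m X))" for X
  have f_m: "b - 3 < m" "b - 2 < m" "b - 3 \<noteq> b - 2" using assms(3,4) by (auto simp: m_def)
  have "(\<integral>\<^sup>+ X. ennreal (dpp_weight k noise D x1 m X) * ennreal (sigma_sel k noise D b (batch x1 m X))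
          \<partial>PiM {..<m} (\<lambda>_. p))
      \<le> (\<integral>\<^sup>+ X. G (\<lambda>n\<in>{..<m}. X (f n)) \<partial>PiM {..<m} (\<lambda>_. p))"
  proof (rule nn_integral_mono)
    fix X :: "nat \<Rightarrow> 'a"
    have "dpp_weight k noise D x1 m (\<lambda>n\<in>{..<m}. X (f n)) = dpp_weight k noise D x1 m X"
      using dpp_weight_cong[of m "\<lambda>n\<in>{..<m}. X (f n)" "X \<circ> f"] dpp_weight_transpose[OF f_m]
      by (simp add: f_def)
    moreover have "batch x1 m (\<lambda>n\<in>{..<m}. X (f n)) = batch x1 m (X \<circ> f)"
      by (simp add: batch_def)
    moreover have "sigma_sel k noise D b (batch x1 m X) \<le> sigma_sel k noise D (b - 1) (batch x1 m (X \<circ> f))"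
      unfolding f_def using assms(1-4) by (intro sigma_sel_batch_le_transposed) (auto simp: m_def)
    ultimately show "ennreal (dpp_weight k noise D x1 m X) * ennreal (sigma_sel k noise D b (batch x1 m X))
        \<le> G (\<lambda>n\<in>{..<m}. X (f n))"
      unfolding G_def by (auto intro!: mult_left_mono ennreal_leI)
  qed
  also have "\<dots> \<le> (\<integral>\<^sup>+ X. G X \<partial>PiM {..<m} (\<lambda>_. p))"
    unfolding f_def using f_m by (intro nn_integral_PiM_transpose_le p) auto
  finally show ?thesis unfolding G_def m_def .
qed

theorem lemma7:
  fixes k :: "'a \<Rightarrow> 'a \<Rightarrow> real" and noise :: real and B t b :: nat
    and M :: "'h measure" and locs :: "'h \<Rightarrow> 'a list" and pmax :: "'h \<Rightarrow> 'a measure"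
  assumes "psd_kernel k"
    and "noise > 0"
    and "B \<ge> 3"
    and "t \<ge> 1"
    and "prob_space M"
    and "\<forall>h\<in>space M. prob_space (pmax h)"
    and "\<forall>h\<in>space M. length (locs h) = (t - 1) * B"
    and "\<forall>h\<in>space M. \<forall>x1\<in>space (pmax h). dpp_norm k noise (locs h) (pmax h) B x1 < \<infinity>"
    and "b \<in> {3..B}"
  shows "(\<integral>\<^sup>+ h. round_expect k noise (locs h) (pmax h) B
              (\<lambda>pts. ennreal (sigma_sel k noise (locs h) b pts)) \<partial>M)
         \<le> (\<integral>\<^sup>+ h. round_expect k noise (locs h) (pmax h) B
              (\<lambda>pts. ennreal (sigma_sel k noise (locs h) (b - 1) pts)) \<partial>M)"
proof (rule nn_integral_mono)
  fix h assume "h \<in> space M"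
  with assms(6) have "prob_space (pmax h)" by blast
  moreover have "3 \<le> b" "b \<le> B" using assms(9) by auto
  ultimately show "round_expect k noise (locs h) (pmax h) B (\<lambda>pts. ennreal (sigma_sel k noise (locs h) b pts))
     \<le> round_expect k noise (locs h) (pmax h) B (\<lambda>pts. ennreal (sigma_sel k noise (locs h) (b - 1) pts))"
    unfolding round_expect_def
    by (intro nn_integral_mono divide_right_mono_ennreal dpp_integral_sigma_sel_mono assms(1,2))
qed

end
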